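(* Let $i\in\mathbb{N}$ be fixed. Let $G\in\mathcal{G}_{k,n,p}$ and $v\neq w\in V(G)$, and let $X=X_0,X_1,\dots$ be a simple random walk on $G$. Then \[ \mathbb{P}[T_{wv}=i]=\mathbb{P}_w[X_i=v]\pm\mathcal{O}\!\left(\frac{1}{p^2n^2}\right). \]
   Context: Fix an integer $k\ge2$ and let $p=p(n)$ satisfy $\frac{\log n}{n^{(k-1)/k}}\le p\le 1-\Omega(\frac{\log^4 n}{n})$. $\mathcal{G}_{k,n,p}$ denotes the set of graphs $G$ on $n$ vertices satisfying: (i) $G$ is not bipartite; (ii) $\operatorname{diam}(G)\le k$; (iii) every vertex has degree $d(v)=pn\pm\mathcal{O}(\sqrt{pn\log n})$; (iv) $2|E(G)|=pn^2\pm\mathcal{O}(\sqrt{pn^2\log n})$; (v) $|N(v)\cap N(w)|=p^2n\pm\mathcal{O}(\max\{\sqrt{p^2n\log n},\log n\})$ for all $v\ne w$; (vi) the unit eigenvector $\phi$ of the largest adjacency eigenvalue has entries $\phi_i=\frac1{\sqrt n}\pm\mathcal{O}(\frac{\log^{3/2}n}{\sqrt p\,n\log(pn)})$; (vii) $\lambda_1=(1+o(1))pn$; (viii) $\max\{|\lambda_2|,|\lambda_n|\}=\mathcal{O}(\sqrt{pn})$, where $\lambda_1\ge\dots\ge\lambda_n$ are the adjacency eigenvalues. Asymptotic notation is as $n\to\infty$ with constants independent of $n$. $\mathbb{P}_w[\cdot]=\mathbb{P}[\cdot\mid X_0=w]$, and $T_{wv}$ is the first time the walk started at $w$ hits $v$.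 *)

theory Defs
  imports "HOL-Analysis.Analysis" "Jordan_Normal_Form.Char_Poly"
begin

definition simple_graph :: "nat \<Rightarrow> (nat \<Rightarrow> nat \<Rightarrow> bool) \<Rightarrow> bool" where
  "simple_graph n E \<longleftrightarrow> (\<forall>x y. E x y \<longrightarrow> x < n \<and> y < n \<and> x \<noteq> y \<and> E y x)"

definition bipartite :: "nat \<Rightarrow> (nat \<Rightarrow> nat \<Rightarrow> bool) \<Rightarrow> bool" where
  "bipartite n E \<longleftrightarrow> (\<exists>S \<subseteq> {..<n}. \<forall>x<n. \<forall>y<n. E x y \<longrightarrow> (x \<in> S \<longleftrightarrow> y \<notin> S))"

fun is_walk :: "(nat \<Rightarrow> nat \<Rightarrow> bool) \<Rightarrow> nat \<Rightarrow> nat list \<Rightarrow> bool" where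
  "is_walk E x [] = True"
| "is_walk E x (y # ys) = (E x y \<and> is_walk E y ys)"

definition diam_le :: "nat \<Rightarrow> (nat \<Rightarrow> nat \<Rightarrow> bool) \<Rightarrow> nat \<Rightarrow> bool" where
  "diam_le n E k \<longleftrightarrow> (\<forall>x<n. \<forall>y<n. \<exists>xs. length xs \<le> k \<and> is_walk E x xs \<and> last (x # xs) = y)"

definition deg :: "nat \<Rightarrow> (nat \<Rightarrow> nat \<Rightarrow> bool) \<Rightarrow> nat \<Rightarrow> nat" where
  "deg n E x = card {y. y < n \<and> E x y}"

definition num_edges :: "nat \<Rightarrow> (nat \<Rightarrow> nat \<Rightarrow> bool) \<Rightarrow> nat" where
  "num_edges n E = card {{x, y} | x y. x < n \<and> y < n \<and> E x y}"

definition codeg :: "nat \<Rightarrow> (nat \<Rightarrow> nat \<Rightarrow> bool) \<Rightarrow> nat \<Rightarrow> nat \<Rightarrow> nat" where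
  "codeg n E x y = card {z. z < n \<and> E x z \<and> E y z}"

definition adj_mat :: "nat \<Rightarrow> (nat \<Rightarrow> nat \<Rightarrow> bool) \<Rightarrow> real mat" where
  "adj_mat n E = mat n n (\<lambda>(i, j). if E i j then 1 else 0)"

definition adj_eigs :: "nat \<Rightarrow> (nat \<Rightarrow> nat \<Rightarrow> bool) \<Rightarrow> real list" where
  "adj_eigs n E = (THE L. length L = n \<and> sorted_wrt (\<ge>) L \<and>
      char_poly (adj_mat n E) = prod_list (map (\<lambda>a. [:- a, 1:]) L))"

text \<open>lambda_j for 1 <= j <= n.\<close>
definition eig :: "nat \<Rightarrow> (nat \<Rightarrow> nat \<Rightarrow> bool) \<Rightarrow> nat \<Rightarrow> real" where
  "eig n E j = adj_eigs n E ! (j - 1)"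

text \<open>The class G_{k,n,p}; the constants hidden in the O-terms and the o(1)-term are
  explicit parameters: Cd (degrees), Ce (edges), Cc (codegrees), Cphi (eigenvector),
  eps (the o(1) of (vii)), Cl (second eigenvalues).\<close>
definition in_Gclass ::
  "nat \<Rightarrow> real \<Rightarrow> real \<Rightarrow> real \<Rightarrow> real \<Rightarrow> real \<Rightarrow> real \<Rightarrow> real \<Rightarrow>
   nat \<Rightarrow> (nat \<Rightarrow> nat \<Rightarrow> bool) \<Rightarrow> bool" where
  "in_Gclass k p Cd Ce Cc Cphi eps Cl n E \<longleftrightarrow>
     simple_graph n E \<and>
     \<not> bipartite n E \<and>
     diam_le n E k \<and>
     (\<forall>x<n. \<bar>real (deg n E x) - p * n\<bar> \<le> Cd * sqrt (p * n * ln n)) \<and>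
     \<bar>2 * real (num_edges n E) - p * n^2\<bar> \<le> Ce * sqrt (p * n^2 * ln n) \<and>
     (\<forall>x<n. \<forall>y<n. x \<noteq> y \<longrightarrow>
        \<bar>real (codeg n E x y) - p^2 * n\<bar> \<le> Cc * max (sqrt (p^2 * n * ln n)) (ln n)) \<and>
     (\<exists>\<phi> \<in> carrier_vec n. adj_mat n E *\<^sub>v \<phi> = eig n E 1 \<cdot>\<^sub>v \<phi> \<and>
        (\<Sum>i<n. (\<phi> $ i)^2) = 1 \<and>
        (\<forall>i<n. \<bar>\<phi> $ i - 1 / sqrt n\<bar> \<le> Cphi * (ln n powr (3/2) / (sqrt p * n * ln (p * n))))) \<and>
     \<bar>eig n E 1 - p * n\<bar> \<le> eps * (p * n) \<and>
     max \<bar>eig n E 2\<bar> \<bar>eig n E n\<bar> \<le> Cl * sqrt (p * n)"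

definition trans_prob :: "nat \<Rightarrow> (nat \<Rightarrow> nat \<Rightarrow> bool) \<Rightarrow> nat \<Rightarrow> nat \<Rightarrow> real" where
  "trans_prob n E x y = (if E x y then 1 / real (deg n E x) else 0)"

fun path_prob :: "nat \<Rightarrow> (nat \<Rightarrow> nat \<Rightarrow> bool) \<Rightarrow> nat \<Rightarrow> nat list \<Rightarrow> real" where
  "path_prob n E x [] = 1"
| "path_prob n E x (y # ys) = trans_prob n E x y * path_prob n E y ys"

text \<open>P_w[X_i = v]: sum over all trajectories X_1..X_i with X_i = v.\<close>
definition prob_at :: "nat \<Rightarrow> (nat \<Rightarrow> nat \<Rightarrow> bool) \<Rightarrow> nat \<Rightarrow> nat \<Rightarrow> nat \<Rightarrow> real" where
  "prob_at n E w i v =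
     (\<Sum>xs\<in>{xs. set xs \<subseteq> {..<n} \<and> length xs = i}.
        if last (w # xs) = v then path_prob n E w xs else 0)"

definition prob_hit :: "nat \<Rightarrow> (nat \<Rightarrow> nat \<Rightarrow> bool) \<Rightarrow> nat \<Rightarrow> nat \<Rightarrow> nat \<Rightarrow> real" where
  "prob_hit n E w i v =
     (\<Sum>xs\<in>{xs. set xs \<subseteq> {..<n} \<and> length xs = i}.
        if last (w # xs) = v \<and> v \<notin> set (butlast (w # xs)) then path_prob n E w xs else 0)"

end

theory Submission
  imports Defs "HOL-Real_Asymp.Real_Asymp"
begin

text \<open>If the walk from \<open>w \<noteq> v\<close> is at \<open>v\<close> at time \<open>i\<close> but \<open>i\<close> is not the hitting time,
  then it was at \<open>v\<close> also at some time \<open>j < i\<close>. For each of the fewer than \<open>i\<close> choices of \<open>j\<close>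
  this needs two steps into \<open>v\<close>, and every step into \<open>v\<close> has probability at most one over the
  minimum degree. Degree concentration and \<open>pn \<ge> n\<^sup>1\<^sup>/\<^sup>k log n\<close>, which is much larger than
  \<open>log n\<close>, make the minimum degree at least \<open>pn / 2\<close>; hence
  \<open>0 \<le> P\<^sub>w[X\<^sub>i = v] - P[T\<^sub>w\<^sub>v = i] \<le> i (2 / pn)\<^sup>2\<close>.\<close>

lemma trans_prob_nonneg: "trans_prob n E x y \<ge> 0"
  by (simp add: trans_prob_def)

lemma path_prob_nonneg: "path_prob n E x xs \<ge> 0"
  by (induction xs arbitrary: x) (auto simp: trans_prob_nonneg)

lemma sum_trans_prob_le_1: "(\<Sum>y<n. trans_prob n E x y) \<le> 1"
proof -
  have "(\<Sum>y<n. trans_prob n E x y) = (\<Sum>y\<in>{y. y < n \<and> E x y}. 1 / real (deg n E x))"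
    unfolding trans_prob_def by (rule sum.mono_neutral_cong_right) auto
  also have "\<dots> = real (deg n E x) * (1 / real (deg n E x))"
    by (simp add: deg_def)
  also have "\<dots> \<le> 1"
    by (cases "deg n E x = 0") auto
  finally show ?thesis .
qed

lemma sum_lists_length_Suc:
  assumes "finite A"
  shows "(\<Sum>xs\<in>{xs. set xs \<subseteq> A \<and> length xs = Suc m}. f xs) =
    (\<Sum>y\<in>A. \<Sum>ys\<in>{xs. set xs \<subseteq> A \<and> length xs = m}. f (y # ys))"
proof -
  have "(\<Sum>xs\<in>{xs. set xs \<subseteq> A \<and> length xs = Suc m}. f xs) =
      sum (f \<circ> (\<lambda>(ys, y). y # ys)) ({xs. set xs \<subseteq> A \<and> length xs = m} \<times> A)"
    unfolding lists_length_Suc_eq by (rule sum.reindex) (rule inj_split_Cons)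
  also have "\<dots> = (\<Sum>ys\<in>{xs. set xs \<subseteq> A \<and> length xs = m}. \<Sum>y\<in>A. f (y # ys))"
    by (simp add: sum.cartesian_product comp_def split_beta)
  also have "\<dots> = (\<Sum>y\<in>A. \<Sum>ys\<in>{xs. set xs \<subseteq> A \<and> length xs = m}. f (y # ys))"
    by (rule sum.swap)
  finally show ?thesis .
qed

text \<open>The marked positions of \<open>ms\<close> are the times at which the walk is required to be at \<open>v\<close>.\<close>

lemma prob_at_marked_times_le:
  assumes into_v: "\<And>x. trans_prob n E x v \<le> d" and "d \<ge> 0"
  shows "(\<Sum>xs\<in>{xs. set xs \<subseteq> {..<n} \<and> length xs = length ms}.
      if list_all2 (\<lambda>b y. b \<longrightarrow> y = v) ms xs then path_prob n E x xs else 0)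
    \<le> d ^ length (filter id ms)"
proof (induction ms arbitrary: x)
  case Nil
  have "{xs::nat list. set xs \<subseteq> {..<n} \<and> length xs = 0} = {[]}"
    by auto
  then show ?case
    by simp
next
  case (Cons b ms)
  define S where "S y = (\<Sum>xs\<in>{xs. set xs \<subseteq> {..<n} \<and> length xs = length ms}.
      if list_all2 (\<lambda>b y. b \<longrightarrow> y = v) ms xs then path_prob n E y xs else 0)" for y
  have S_le: "S y \<le> d ^ length (filter id ms)" for y
    unfolding S_def by (rule Cons.IH)
  have S_nonneg: "S y \<ge> 0" for y
    unfolding S_def by (rule sum_nonneg) (auto simp: path_prob_nonneg)
  have "(\<Sum>xs\<in>{xs. set xs \<subseteq> {..<n} \<and> length xs = length (b # ms)}.
      if list_all2 (\<lambda>b y. b \<longrightarrow> y = v) (b # ms) xs then path_prob n E x xs else 0)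
    = (\<Sum>y<n. if b \<longrightarrow> y = v then trans_prob n E x y * S y else 0)"
    by (simp add: sum_lists_length_Suc S_def sum_distrib_left if_distrib cong: if_cong)
      (rule sum.cong; auto)
  also have "\<dots> \<le> d ^ length (filter id (b # ms))"
  proof (cases b)
    case True
    then have "(\<Sum>y<n. if b \<longrightarrow> y = v then trans_prob n E x y * S y else 0)
        = (if v < n then trans_prob n E x v * S v else 0)"
      by (simp add: sum.delta')
    also have "\<dots> \<le> d * d ^ length (filter id ms)"
      using S_nonneg S_le into_v \<open>d \<ge> 0\<close> by (auto intro!: mult_mono)
    finally show ?thesis
      using True by simp
  next
    case False
    then have "(\<Sum>y<n. if b \<longrightarrow> y = v then trans_prob n E x y * S y else 0)
        = (\<Sum>y<n. trans_prob n E x y * S y)"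
      by simp
    also have "\<dots> \<le> (\<Sum>y<n. trans_prob n E x y) * d ^ length (filter id ms)"
      unfolding sum_distrib_right
      by (rule sum_mono) (auto intro!: mult_left_mono S_le trans_prob_nonneg)
    also have "\<dots> \<le> d ^ length (filter id ms)"
      using sum_trans_prob_le_1 \<open>d \<ge> 0\<close>
      by (auto intro!: mult_left_le_one_le sum_nonneg trans_prob_nonneg)
    finally show ?thesis
      using False by simp
  qed
  finally show ?case .
qed

lemma prob_at_times_le:
  assumes "\<And>x. trans_prob n E x v \<le> d" "d \<ge> 0" and "T \<subseteq> {..<i}"
  shows "(\<Sum>xs\<in>{xs. set xs \<subseteq> {..<n} \<and> length xs = i}.
      if \<forall>t\<in>T. xs ! t = v then path_prob n E w xs else 0) \<le> d ^ card T"
proof -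
  define ms where "ms = map (\<lambda>t. t \<in> T) [0..<i]"
  have "length (filter id ms) = card {t. t < i \<and> t \<in> T}"
    unfolding ms_def length_filter_conv_card by (intro arg_cong[where f = card]) auto
  also have "{t. t < i \<and> t \<in> T} = T"
    using \<open>T \<subseteq> {..<i}\<close> by auto
  finally have card_T: "length (filter id ms) = card T" .
  have marks_iff: "list_all2 (\<lambda>b y. b \<longrightarrow> y = v) ms xs \<longleftrightarrow> (\<forall>t\<in>T. xs ! t = v)"
    if "length xs = i" for xs
    using that \<open>T \<subseteq> {..<i}\<close> by (auto simp: ms_def list_all2_conv_all_nth)
  have "length ms = i"
    by (simp add: ms_def)
  have "(\<Sum>xs\<in>{xs. set xs \<subseteq> {..<n} \<and> length xs = i}.
      if \<forall>t\<in>T. xs ! t = v then path_prob n E w xs else 0) =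
    (\<Sum>xs\<in>{xs. set xs \<subseteq> {..<n} \<and> length xs = i}.
      if list_all2 (\<lambda>b y. b \<longrightarrow> y = v) ms xs then path_prob n E w xs else 0)"
    by (intro sum.cong refl) (auto simp: marks_iff)
  also have "\<dots> \<le> d ^ length (filter id ms)"
    using prob_at_marked_times_le[OF assms(1,2), of ms w] unfolding \<open>length ms = i\<close> .
  also have "\<dots> = d ^ card T"
    by (simp only: card_T)
  finally show ?thesis .
qed

lemma prob_at_minus_prob_hit:
  assumes "v \<noteq> w"
  shows "prob_at n E w i v - prob_hit n E w i v =
    (\<Sum>xs\<in>{xs. set xs \<subseteq> {..<n} \<and> length xs = i}.
      if last xs = v \<and> v \<in> set (butlast xs) then path_prob n E w xs else 0)"
  unfolding prob_at_def prob_hit_def sum_subtractf[symmetric]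
  using assms by (intro sum.cong) (auto split: list.split)

lemma prob_hit_approx_prob_at:
  assumes into_v: "\<And>x. trans_prob n E x v \<le> d" "d \<ge> 0" and "v \<noteq> w"
  shows "\<bar>prob_hit n E w i v - prob_at n E w i v\<bar> \<le> real i * d\<^sup>2"
proof -
  define L where "L = {xs. set xs \<subseteq> {..<n} \<and> length xs = i}"
  define revisit where "revisit j xs = (if \<forall>t\<in>{j, i - 1}. xs ! t = v then path_prob n E w xs else 0)"
    for j xs
  have diff: "prob_at n E w i v - prob_hit n E w i v =
      (\<Sum>xs\<in>L. if last xs = v \<and> v \<in> set (butlast xs) then path_prob n E w xs else 0)"
    unfolding L_def by (rule prob_at_minus_prob_hit[OF \<open>v \<noteq> w\<close>])
  have diff_nonneg: "0 \<le> prob_at n E w i v - prob_hit n E w i v"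
    unfolding diff by (rule sum_nonneg) (auto simp: path_prob_nonneg)
  have union_bound: "(if last xs = v \<and> v \<in> set (butlast xs) then path_prob n E w xs else 0)
      \<le> (\<Sum>j<i - 1. revisit j xs)" if "xs \<in> L" for xs
  proof (cases "last xs = v \<and> v \<in> set (butlast xs)")
    case True
    have len: "length xs = i"
      using that by (simp add: L_def)
    obtain j where j: "j < i - 1" "xs ! j = v"
      using True len by (auto simp: in_set_conv_nth nth_butlast)
    have "xs \<noteq> []"
      using True by auto
    then have "xs ! (i - 1) = v"
      using True len by (simp add: last_conv_nth)
    with j have "path_prob n E w xs = revisit j xs"
      by (simp add: revisit_def)
    also have "\<dots> \<le> (\<Sum>j<i - 1. revisit j xs)"
      using j by (intro member_le_sum) (auto simp: revisit_def path_prob_nonneg)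
    finally show ?thesis
      using True by simp
  qed (auto intro!: sum_nonneg simp: revisit_def path_prob_nonneg)
  have "prob_at n E w i v - prob_hit n E w i v \<le> (\<Sum>xs\<in>L. \<Sum>j<i - 1. revisit j xs)"
    unfolding diff by (rule sum_mono) (rule union_bound)
  also have "\<dots> = (\<Sum>j<i - 1. \<Sum>xs\<in>L. revisit j xs)"
    by (rule sum.swap)
  also have "\<dots> \<le> (\<Sum>j<i - 1. d\<^sup>2)"
  proof (rule sum_mono)
    fix j assume "j \<in> {..<i - 1}"
    then have "card {j, i - 1} = 2" "{j, i - 1} \<subseteq> {..<i}"
      by auto
    then show "(\<Sum>xs\<in>L. revisit j xs) \<le> d\<^sup>2"
      using prob_at_times_le[OF into_v, of "{j, i - 1}" i w] unfolding L_def revisit_def by simp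
  qed
  also have "\<dots> \<le> real i * d\<^sup>2"
    by (simp add: mult_right_mono)
  finally show ?thesis
    using diff_nonneg by linarith
qed

lemma trans_prob_le_if_min_deg:
  assumes "simple_graph n E" and "\<And>x. x < n \<Longrightarrow> real (deg n E x) \<ge> D" and "D > 0"
  shows "trans_prob n E x v \<le> 1 / D"
proof (cases "E x v")
  case True
  then have "x < n"
    using assms(1) by (simp add: simple_graph_def)
  then have "1 / real (deg n E x) \<le> 1 / D"
    using assms(2,3) frac_le[of 1 1 D] by simp
  with True show ?thesis
    by (simp add: trans_prob_def)
qed (use \<open>D > 0\<close> in \<open>simp add: trans_prob_def\<close>)

lemma mult_sqrt_le_half:
  fixes C L x :: real
  assumes "4 * C\<^sup>2 * L \<le> x" "0 \<le> L"
  shows "C * sqrt (x * L) \<le> x / 2"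
proof -
  have "0 \<le> x"
    using assms by (smt (verit) mult_nonneg_nonneg zero_le_power2)
  have "C * sqrt (x * L) \<le> \<bar>C\<bar> * sqrt (x * L)"
    using \<open>0 \<le> x\<close> assms(2) by (intro mult_right_mono) auto
  also have "\<dots> = sqrt (C\<^sup>2 * (x * L))"
    by (simp add: real_sqrt_mult)
  also have "\<dots> \<le> sqrt ((x / 2)\<^sup>2)"
    using assms \<open>0 \<le> x\<close> mult_left_mono[OF assms(1) \<open>0 \<le> x\<close>]
    by (intro real_sqrt_le_mono) (simp add: power2_eq_square algebra_simps)
  also have "\<dots> = x / 2"
    using \<open>0 \<le> x\<close> by simp
  finally show ?thesis .
qed

lemma in_Gclass_trans_prob_le:
  assumes G: "in_Gclass k p Cd Ce Cc Cphi eps Cl n E"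
    and "4 * Cd\<^sup>2 * ln n \<le> p * n" "p * n > 0" "ln n \<ge> 0"
  shows "trans_prob n E x v \<le> 2 / (p * n)"
proof -
  have "Cd * sqrt (p * n * ln n) \<le> p * n / 2"
    using assms by (intro mult_sqrt_le_half) auto
  then have "real (deg n E y) \<ge> p * n / 2" if "y < n" for y
    using G that unfolding in_Gclass_def by fastforce
  with G \<open>p * n > 0\<close> show ?thesis
    using trans_prob_le_if_min_deg[of n E "p * n / 2"] by (simp add: in_Gclass_def)
qed

lemma eventually_mult_ln_le_pn:
  fixes p :: "nat \<Rightarrow> real"
  assumes "k > 0"
    and "\<forall>\<^sub>F n in sequentially. ln n / real n powr ((real k - 1) / real k) \<le> p n"
  shows "\<forall>\<^sub>F n in sequentially. M * ln n \<le> p n * n"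
proof -
  have "filterlim (\<lambda>n. real n powr (1 / real k)) at_top sequentially"
    using \<open>k > 0\<close> by (intro filterlim_compose[OF real_powr_at_top filterlim_real_sequentially]) simp
  then have "\<forall>\<^sub>F n in sequentially. M \<le> real n powr (1 / real k)"
    by (simp add: filterlim_at_top)
  with assms(2) eventually_gt_at_top[of 0] show ?thesis
  proof eventually_elim
    case (elim n)
    have "1 - (real k - 1) / real k = 1 / real k"
      using \<open>k > 0\<close> by (simp add: field_simps)
    then have "real n powr (1 / real k) = real n powr (1 - (real k - 1) / real k)"
      by simp
    also have "\<dots> = real n / real n powr ((real k - 1) / real k)"
      by (simp add: powr_diff)
    finally have "real n * (ln n / real n powr ((real k - 1) / real k)) = real n powr (1 / real k) * ln n"
      by simp
    moreover have "real n * (ln n / real n powr ((real k - 1) / real k)) \<le> p n * n"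
      by (subst mult.commute[of "p n"]) (rule mult_left_mono[OF elim(1)]; simp)
    moreover have "M * ln n \<le> real n powr (1 / real k) * ln n"
      using elim by (intro mult_right_mono) auto
    ultimately show ?case
      by linarith
  qed
qed

theorem lemma5p4:
  fixes k i :: nat and p :: "nat \<Rightarrow> real" and eps :: "nat \<Rightarrow> real"
    and Cd Ce Cc Cphi Cl c :: real
  assumes "k \<ge> 2"
    and "\<forall>\<^sub>F n in sequentially. ln n / real n powr ((real k - 1) / real k) \<le> p n"
    and "\<forall>n. p n \<le> 1"
    and "c > 0"
    and "\<forall>\<^sub>F n in sequentially. 1 - p n \<ge> c * (ln n ^ 4 / n)"
    and "eps \<longlonglongrightarrow> 0"
  shows "\<exists>C N. \<forall>n \<ge> N. \<forall>E. in_Gclass k (p n) Cd Ce Cc Cphi (eps n) Cl n E \<longrightarrow>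
           (\<forall>v<n. \<forall>w<n. v \<noteq> w \<longrightarrow>
              \<bar>prob_hit n E w i v - prob_at n E w i v\<bar> \<le> C / ((p n)^2 * (real n)^2))"
proof -
  obtain N where N: "\<And>n. n \<ge> N \<Longrightarrow> (4 * Cd\<^sup>2 + 1) * ln n \<le> p n * n \<and> 3 \<le> n"
    using eventually_conj[OF eventually_mult_ln_le_pn[OF _ assms(2)] eventually_ge_at_top[of 3]]
      \<open>k \<ge> 2\<close> unfolding eventually_sequentially by fastforce
  have "\<bar>prob_hit n E w i v - prob_at n E w i v\<bar> \<le> 4 * real i / ((p n)\<^sup>2 * (real n)\<^sup>2)"
    if "n \<ge> N" and G: "in_Gclass k (p n) Cd Ce Cc Cphi (eps n) Cl n E" and "v \<noteq> w" for n E v w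
  proof -
    have "ln n > 0" "(4 * Cd\<^sup>2 + 1) * ln n \<le> p n * n"
      using N[OF \<open>n \<ge> N\<close>] by auto
    then have "p n * n > 0" "4 * Cd\<^sup>2 * ln n \<le> p n * n"
      by (smt (verit) mult_pos_pos zero_le_power2 mult_nonneg_nonneg distrib_right)+
    then have "trans_prob n E x v \<le> 2 / (p n * n)" for x
      using in_Gclass_trans_prob_le[OF G] \<open>ln n > 0\<close> by simp
    from prob_hit_approx_prob_at[OF this _ \<open>v \<noteq> w\<close>] \<open>p n * n > 0\<close>
    show ?thesis
      by (simp add: field_simps power2_eq_square)
  qed
  then show ?thesis
    by blast
qed

end
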